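(* Let $R$ be a partially colored tree in which every colored vertex is a leaf (a trunk), colored from a set of $3$ colors, having two colored vertices $x$ and $y$ and possibly one further colored vertex $v$ (and no other colored vertices), such that (i) $c(x)\ne c(y)$, (ii) $d(x,y)$ is even, and (iii) every vertex at odd distance from $x$ on the unique $x,y$-path has degree at least $4$. Then Bob can win the $3$-Expanded Coloring Game on $R$ if Alice chooses to pass on her first turn.
   Context: $c(w)$ denotes the color of a colored vertex $w$; colorings are proper on colored vertices. A color is legal for an uncolored vertex if no neighbor has it. The $k$-coloring game on a partially colored graph: Alice and Bob alternate turns, Alice first, each coloring an uncolored vertex with a legal color from a $k$-set of colors; Bob wins if at some point an uncolored vertex has no legal color, Alice wins if all vertices get colored. The $k$-Expanded Coloring Game ($k$-ECG) is the same except that on her turn Alice may choose not to color a vertex, and if she does not color a vertex she may instead add to the forest a single new colored leaf (a new vertex joined to exactly one existing vertex, colored with one of the $k$ colors). *)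

theory Defs
  imports Main
begin

text \<open>Vertices are natural numbers so that fresh vertices (new leaves) always exist.\<close>

definition degree :: "(nat \<times> nat) set \<Rightarrow> nat \<Rightarrow> nat" where
  "degree E u = card {w. (u, w) \<in> E}"

definition is_walk :: "(nat \<times> nat) set \<Rightarrow> nat list \<Rightarrow> bool" where
  "is_walk E p \<longleftrightarrow> p \<noteq> [] \<and> (\<forall>i. Suc i < length p \<longrightarrow> (p ! i, p ! Suc i) \<in> E)"

definition is_path :: "(nat \<times> nat) set \<Rightarrow> nat list \<Rightarrow> nat \<Rightarrow> nat \<Rightarrow> bool" where
  "is_path E p a b \<longleftrightarrow> is_walk E p \<and> distinct p \<and> hd p = a \<and> last p = b"

definition has_cycle :: "(nat \<times> nat) set \<Rightarrow> bool" where
  "has_cycle E \<longleftrightarrow> (\<exists>c. length c \<ge> 3 \<and> distinct c \<and> is_walk E c \<and> (last c, hd c) \<in> E)"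

definition is_tree :: "nat set \<Rightarrow> (nat \<times> nat) set \<Rightarrow> bool" where
  "is_tree V E \<longleftrightarrow> finite V \<and> V \<noteq> {} \<and> E \<subseteq> V \<times> V \<and> sym E \<and> (\<forall>u. (u, u) \<notin> E)
     \<and> (\<forall>a\<in>V. \<forall>b\<in>V. \<exists>p. is_path E p a b) \<and> \<not> has_cycle E"

definition proper_partial :: "(nat \<times> nat) set \<Rightarrow> (nat \<Rightarrow> nat option) \<Rightarrow> bool" where
  "proper_partial E col \<longleftrightarrow> (\<forall>u w. (u, w) \<in> E \<longrightarrow> col u \<noteq> None \<longrightarrow> col u \<noteq> col w)"

definition legal :: "nat \<Rightarrow> (nat \<times> nat) set \<Rightarrow> (nat \<Rightarrow> nat option) \<Rightarrow> nat \<Rightarrow> nat \<Rightarrow> bool" where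
  "legal k E col u c \<longleftrightarrow> c < k \<and> (\<forall>w. (u, w) \<in> E \<longrightarrow> col w \<noteq> Some c)"

definition stuck :: "nat \<Rightarrow> nat set \<Rightarrow> (nat \<times> nat) set \<Rightarrow> (nat \<Rightarrow> nat option) \<Rightarrow> bool" where
  "stuck k V E col \<longleftrightarrow> (\<exists>u\<in>V. col u = None \<and> (\<forall>c. \<not> legal k E col u c))"

inductive ecg_alice_move :: "nat \<Rightarrow> nat set \<Rightarrow> (nat \<times> nat) set \<Rightarrow> (nat \<Rightarrow> nat option)
    \<Rightarrow> nat set \<Rightarrow> (nat \<times> nat) set \<Rightarrow> (nat \<Rightarrow> nat option) \<Rightarrow> bool" where
  color: "u \<in> V \<Longrightarrow> col u = None \<Longrightarrow> legal k E col u c \<Longrightarrow>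
            ecg_alice_move k V E col V E (col(u := Some c))"
| pass: "ecg_alice_move k V E col V E col"
| add_leaf: "w \<notin> V \<Longrightarrow> u \<in> V \<Longrightarrow> c < k \<Longrightarrow> col u \<noteq> Some c \<Longrightarrow>
            ecg_alice_move k V E col (insert w V) (E \<union> {(u, w), (w, u)}) (col(w := Some c))"

inductive ecg_bob_wins_bob_turn and ecg_bob_wins_alice_turn
  :: "nat \<Rightarrow> nat set \<Rightarrow> (nat \<times> nat) set \<Rightarrow> (nat \<Rightarrow> nat option) \<Rightarrow> bool" where
  bob_stuck: "stuck k V E col \<Longrightarrow> ecg_bob_wins_bob_turn k V E col"
| bob_move: "u \<in> V \<Longrightarrow> col u = None \<Longrightarrow> legal k E col u c \<Longrightarrow>
      ecg_bob_wins_alice_turn k V E (col(u := Some c)) \<Longrightarrow> ecg_bob_wins_bob_turn k V E col"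
| alice_stuck: "stuck k V E col \<Longrightarrow> ecg_bob_wins_alice_turn k V E col"
| alice_all: "(\<forall>V' E' col'. ecg_alice_move k V E col V' E' col' \<longrightarrow> ecg_bob_wins_bob_turn k V' E' col')
      \<Longrightarrow> ecg_bob_wins_alice_turn k V E col"

end

theory Submission
  imports Defs
begin

text \<open>Let x = p 0, ..., p (2m) = y be the path; every odd vertex p i has two side neighbours
  sp i, tp i off the path. Bob keeps the following invariant when it is his turn: for some even j,
  p j and p (2m) carry distinct colours a and b, the path strictly between them is uncoloured, and
  apart from p j and p (2m) at most one coloured vertex e lies on or next to the part of the tree
  beyond p j. Let c be the third colour.

  If j + 2 = 2m, Bob colours a side of p (j+1) with c, and p (j+1) has no colour left. If p (j+2)
  can take c, Bob colours it c: either Alice colours p (j+1) and the invariant moves to j + 2, or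
  Bob next colours a side of p (j+1) with b and wins, or both sides are blocked, and then Alice's
  new vertex is one of the two blockers and lies away from the rest of the path, so again the
  invariant moves to j + 2. Otherwise e is a c-coloured neighbour of p (j+2); Bob colours
  sp (j+1) with c, and whatever Alice does, Bob can leave p (j+1) or p (j+2) without a legal colour.

  All separation arguments come from acyclicity, which persists because Alice only adds leaves.\<close>

lemma is_walk_iff_successively:
  "is_walk E q \<longleftrightarrow> q \<noteq> [] \<and> successively (\<lambda>u w. (u, w) \<in> E) q"
  unfolding is_walk_def successively_conv_nth by blast

lemma two_elements_avoiding:
  assumes "finite N" "4 \<le> card N"
  obtains s t where "s \<in> N" "t \<in> N" "s \<noteq> t" "s \<notin> {a, b}" "t \<notin> {a, b}"
proof -
  have "card N - card {a, b} \<le> card (N - {a, b})" by (rule diff_card_le_card_Diff) simp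
  moreover have "card {a, b} \<le> 2" by (simp add: card_insert_le_m1)
  ultimately have "\<not> card (N - {a, b}) \<le> Suc 0" using assms by linarith
  then show ?thesis using that assms(1) by (auto simp: card_le_Suc0_iff_eq)
qed

lemma two_le_card: "finite N \<Longrightarrow> a \<in> N \<Longrightarrow> b \<in> N \<Longrightarrow> a \<noteq> b \<Longrightarrow> 2 \<le> card N"
  by (metis card_le_Suc0_iff_eq not_less_eq_eq numeral_2_eq_2)

lemma bob_wins_stuck_vertex:
  assumes "u \<in> V" "col u = None" "\<And>r. r < k \<Longrightarrow> \<exists>w. (u, w) \<in> E \<and> col w = Some r"
  shows "ecg_bob_wins_bob_turn k V E col"
proof (rule bob_stuck)
  show "stuck k V E col" unfolding stuck_def legal_def using assms by (meson not_less)
qed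

lemma bob_wins_by_trap:
  assumes "u \<in> V" "w \<in> V" "u \<noteq> w" "col u = None" "col w = None" "legal k E col w r"
    "\<And>c. c < k \<Longrightarrow> \<exists>n. (u, n) \<in> E \<and> (col(w := Some r)) n = Some c"
  shows "ecg_bob_wins_bob_turn k V E col"
proof (rule bob_move[of w V col k E r])
  show "ecg_bob_wins_alice_turn k V E (col(w := Some r))"
  proof (rule alice_stuck)
    show "stuck k V E (col(w := Some r))" unfolding stuck_def legal_def
      using assms by (metis fun_upd_other)
  qed
qed (use assms in auto)

definition alice_changes :: "nat \<Rightarrow> nat set \<Rightarrow> (nat \<times> nat) set \<Rightarrow> (nat \<Rightarrow> nat option)
    \<Rightarrow> nat set \<Rightarrow> (nat \<times> nat) set \<Rightarrow> (nat \<Rightarrow> nat option) \<Rightarrow> nat \<Rightarrow> bool" where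
  "alice_changes k V E col V' E' col' z \<longleftrightarrow> V \<subseteq> V' \<and> E \<subseteq> E' \<and> (\<forall>u\<in>V'. u \<notin> V \<longrightarrow> u = z)
     \<and> (\<forall>u. u \<noteq> z \<longrightarrow> col' u = col u) \<and> (\<forall>a\<in>V. \<forall>b\<in>V. (a, b) \<in> E' \<longrightarrow> (a, b) \<in> E)
     \<and> (z \<in> V \<longrightarrow> col' z \<noteq> col z \<longrightarrow> col z = None \<and> (\<exists>r. col' z = Some r \<and> legal k E col z r))"

lemma alice_changes_other: "alice_changes k V E col V' E' col' z \<Longrightarrow> u \<noteq> z \<Longrightarrow> col' u = col u"
  unfolding alice_changes_def by blast

lemma alice_changes_colored:
  "alice_changes k V E col V' E' col' z \<Longrightarrow> u \<in> V \<Longrightarrow> col u \<noteq> None \<Longrightarrow> col' u = col u"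
  unfolding alice_changes_def by metis

lemma alice_changes_legal:
  "alice_changes k V E col V' E' col' z \<Longrightarrow> z \<in> V \<Longrightarrow> col z = None \<Longrightarrow> col' z = Some r
     \<Longrightarrow> legal k E col z r"
  unfolding alice_changes_def by auto

lemma alice_changes_vertex: "alice_changes k V E col V' E' col' z \<Longrightarrow> u \<in> V' \<Longrightarrow> u \<noteq> z \<Longrightarrow> u \<in> V"
  unfolding alice_changes_def by blast

lemma alice_changes_mono: "alice_changes k V E col V' E' col' z \<Longrightarrow> V \<subseteq> V' \<and> E \<subseteq> E'"
  unfolding alice_changes_def by blast

lemma alice_changes_edge:
  "alice_changes k V E col V' E' col' z \<Longrightarrow> (a, b) \<in> E' \<Longrightarrow> a \<in> V \<Longrightarrow> b \<in> V \<Longrightarrow> (a, b) \<in> E"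
  unfolding alice_changes_def by blast

definition near :: "(nat \<times> nat) set \<Rightarrow> nat \<Rightarrow> nat set \<Rightarrow> bool" where
  "near E z S \<longleftrightarrow> z \<in> S \<or> (\<exists>y\<in>S. (z, y) \<in> E)"

definition blocks :: "(nat \<times> nat) set \<Rightarrow> (nat \<Rightarrow> nat option) \<Rightarrow> nat \<Rightarrow> nat \<Rightarrow> nat \<Rightarrow> bool" where
  "blocks E col w r z \<longleftrightarrow> (z = w \<and> col w \<noteq> None) \<or> ((w, z) \<in> E \<and> col z = Some r)"

lemma blocker_exists: "\<not> (col w = None \<and> legal k E col w r) \<Longrightarrow> r < k \<Longrightarrow> \<exists>z. blocks E col w r z"
  unfolding blocks_def legal_def by auto

locale forked_path =
  fixes V0 :: "nat set" and E0 :: "(nat \<times> nat) set" and p :: "nat \<Rightarrow> nat" and m :: nat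
    and sp tp :: "nat \<Rightarrow> nat"
  assumes edges_in: "E0 \<subseteq> V0 \<times> V0" and sym_E0: "sym E0" and irrefl: "\<forall>u. (u, u) \<notin> E0"
    and acyclic: "\<not> has_cycle E0"
    and m_pos: "1 \<le> m"
    and inj_path: "inj_on p {..2*m}"
    and path_edge: "\<forall>i<2*m. (p i, p (Suc i)) \<in> E0"
    and sides: "\<forall>i. odd i \<and> i < 2*m \<longrightarrow> (p i, sp i) \<in> E0 \<and> (p i, tp i) \<in> E0 \<and> sp i \<noteq> tp i
        \<and> sp i \<notin> {p (i - 1), p (Suc i)} \<and> tp i \<notin> {p (i - 1), p (Suc i)}"
begin

definition side :: "nat \<Rightarrow> nat \<Rightarrow> bool" where
  "side s i \<longleftrightarrow> odd i \<and> i < 2*m \<and> (s = sp i \<or> s = tp i)"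

definition off_path :: "nat \<Rightarrow> bool" where
  "off_path z \<longleftrightarrow> (\<forall>l\<le>2*m. z \<noteq> p l)"

lemma E0_sym: "(a, b) \<in> E0 \<Longrightarrow> (b, a) \<in> E0"
  using sym_E0 by (meson symD)

lemma side_adj: "side s i \<Longrightarrow> (p i, s) \<in> E0"
  unfolding side_def using sides by auto

lemma side_ne_path_nbrs: "side s i \<Longrightarrow> s \<noteq> p (i - 1) \<and> s \<noteq> p (Suc i)"
  unfolding side_def using sides by auto

lemma side_index: "side s i \<Longrightarrow> i < 2*m \<and> odd i"
  unfolding side_def by simp

lemma path_in_V0: "l \<le> 2*m \<Longrightarrow> p l \<in> V0"
proof (cases "l < 2*m")
  case True
  then show ?thesis using path_edge edges_in by blast
next
  case False
  assume "l \<le> 2*m"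
  then have "l = Suc (2*m - 1)" "2*m - 1 < 2*m" using False m_pos by simp_all
  then show ?thesis using path_edge edges_in by (metis mem_Sigma_iff subsetD)
qed

lemma side_in_V0: "side s i \<Longrightarrow> s \<in> V0"
  using side_adj edges_in by blast

lemma no_closed_walk:
  assumes "distinct L" "successively (\<lambda>u w. (u, w) \<in> E0) L" "3 \<le> length L" "(last L, hd L) \<in> E0"
  shows False
  using acyclic assms unfolding has_cycle_def is_walk_iff_successively by auto

lemma segment_props:
  assumes "a \<le> b" "b \<le> 2*m"
  shows "successively (\<lambda>u w. (u, w) \<in> E0) (map p [a..<Suc b])" "distinct (map p [a..<Suc b])"
    "hd (map p [a..<Suc b]) = p a" "last (map p [a..<Suc b]) = p b"
    "length (map p [a..<Suc b]) = Suc b - a" "set (map p [a..<Suc b]) = p ` {a..b}"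
proof -
  show "successively (\<lambda>u w. (u, w) \<in> E0) (map p [a..<Suc b])"
    unfolding successively_conv_nth using path_edge assms by (simp del: upt_Suc)
  have "inj_on p {a..b}" using inj_on_subset[OF inj_path] assms by auto
  moreover have "set [a..<Suc b] = {a..b}" by auto
  ultimately show "distinct (map p [a..<Suc b])" by (simp add: distinct_map del: upt_Suc)
  show "hd (map p [a..<Suc b]) = p a" using assms by (simp add: hd_map del: upt_Suc)
  show "set (map p [a..<Suc b]) = p ` {a..b}"
    by (simp add: atLeastLessThanSuc_atLeastAtMost del: upt_Suc)
qed (use assms in \<open>auto simp: last_map\<close>)

lemma no_cycle_segment:
  assumes "a \<le> b" "b \<le> 2*m" "X \<noteq> []" "distinct X" "set X \<inter> p ` {a..b} = {}"
    "successively (\<lambda>u w. (u, w) \<in> E0) X" "(p b, hd X) \<in> E0" "(last X, p a) \<in> E0"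
    "3 \<le> Suc b - a + length X"
  shows False
proof (rule no_closed_walk)
  note seg = segment_props[OF assms(1,2)]
  let ?L = "map p [a..<Suc b] @ X"
  show "distinct ?L" using seg assms by (auto simp del: upt_Suc)
  show "successively (\<lambda>u w. (u, w) \<in> E0) ?L" using seg assms by (simp add: successively_append_iff del: upt_Suc)
  show "3 \<le> length ?L" using seg assms by (simp del: upt_Suc)
  show "(last ?L, hd ?L) \<in> E0" using seg assms by (simp del: upt_Suc)
qed

lemma path_adj_consecutive:
  assumes "a \<le> 2*m" "b \<le> 2*m" "(p a, p b) \<in> E0"
  shows "b = Suc a \<or> a = Suc b"
proof -
  have chord: "b = Suc a" if "a < b" "b \<le> 2*m" "(p b, p a) \<in> E0" for a b
  proof (rule ccontr)
    assume "b \<noteq> Suc a"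
    then have "3 \<le> Suc b - a" using that by simp
    then show False
      using no_closed_walk[of "map p [a..<Suc b]"] segment_props[of a b] that by (simp del: upt_Suc)
  qed
  show ?thesis
    using chord[of a b] chord[of b a] assms irrefl E0_sym by (cases a b rule: linorder_cases) auto
qed

lemma off_path_notin: "off_path z \<Longrightarrow> b \<le> 2*m \<Longrightarrow> z \<notin> p ` {a..b}"
  unfolding off_path_def by (auto simp: image_iff)

lemma off_path_ne: "off_path z \<Longrightarrow> l \<le> 2*m \<Longrightarrow> z \<noteq> p l"
  unfolding off_path_def by blast

lemma side_off_path: "side s i \<Longrightarrow> off_path s"
  unfolding off_path_def
proof (intro allI impI notI)
  fix l assume h: "side s i" "l \<le> 2*m" "s = p l"
  have "(p i, p l) \<in> E0" "i < 2*m" using side_adj side_index h by auto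
  then have "l = Suc i \<or> i = Suc l" using path_adj_consecutive h by simp
  then show False using side_ne_path_nbrs[OF h(1)] h by auto
qed

lemma side_adj_path:
  assumes "side s i" "l \<le> 2*m" "(s, p l) \<in> E0"
  shows "l = i"
proof (rule ccontr)
  have s: "off_path s" "(p i, s) \<in> E0" "i < 2*m" using side_off_path side_adj side_index assms by auto
  assume "l \<noteq> i"
  then consider "i < l" | "l < i" by linarith
  then show False
  proof cases
    case 1
    show False
      by (rule no_cycle_segment[of i l "[s]"]) (use 1 s assms E0_sym off_path_notin in auto)
  next
    case 2
    show False
      by (rule no_cycle_segment[of l i "[s]"]) (use 2 s assms E0_sym off_path_notin in auto)
  qed
qed

lemma sides_not_adj:
  assumes "side s i" "side s' i'" "s \<noteq> s'"
  shows "(s, s') \<notin> E0"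
proof
  assume e: "(s, s') \<in> E0"
  have h: "off_path s" "off_path s'" "(p i, s) \<in> E0" "(p i', s') \<in> E0" "i < 2*m" "i' < 2*m"
    using side_off_path side_adj side_index assms by auto
  consider "i \<le> i'" | "i' < i" by linarith
  then show False
  proof cases
    case 1
    show False
      by (rule no_cycle_segment[of i i' "[s', s]"]) (use 1 h assms e E0_sym off_path_notin in auto)
  next
    case 2
    show False
      by (rule no_cycle_segment[of i' i "[s, s']"]) (use 2 h assms e E0_sym off_path_notin in auto)
  qed
qed

lemma off_path_if_adj_side:
  assumes "side s i" "(z, s) \<in> E0" "z \<noteq> p i"
  shows "off_path z"
  unfolding off_path_def
proof (intro allI impI notI)
  fix l assume "l \<le> 2*m" "z = p l"
  then have "l = i" using side_adj_path[OF assms(1), of l] assms(2) E0_sym by blast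
  then show False using assms(3) \<open>z = p l\<close> by simp
qed

lemma common_nbr_side_path:
  assumes "side s i" "(z, s) \<in> E0" "l \<le> 2*m" "(z, p l) \<in> E0"
  shows "z = p i"
proof (rule ccontr)
  assume "z \<noteq> p i"
  then have h: "off_path s" "off_path z" "(p i, s) \<in> E0" "i < 2*m" "z \<noteq> s"
    using side_off_path side_adj side_index off_path_if_adj_side assms irrefl by auto
  consider "l \<le> i" | "i < l" by linarith
  then show False
  proof cases
    case 1
    show False
      by (rule no_cycle_segment[of l i "[s, z]"]) (use 1 h assms E0_sym off_path_notin in auto)
  next
    case 2
    show False
      by (rule no_cycle_segment[of i l "[z, s]"]) (use 2 h assms E0_sym off_path_notin in auto)
  qed
qed

lemma common_nbr_sides:
  assumes "side s i" "side s' i'" "s \<noteq> s'" "(z, s) \<in> E0" "(z, s') \<in> E0"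
  shows "z = p i"
proof (rule ccontr)
  assume "z \<noteq> p i"
  then have h: "off_path s" "off_path s'" "off_path z" "(p i, s) \<in> E0" "(p i', s') \<in> E0"
    "i < 2*m" "i' < 2*m" "z \<noteq> s" "z \<noteq> s'"
    using side_off_path side_adj side_index off_path_if_adj_side assms irrefl by auto
  consider "i \<le> i'" | "i' < i" by linarith
  then show False
  proof cases
    case 1
    show False
      by (rule no_cycle_segment[of i i' "[s', z, s]"]) (use 1 h assms E0_sym off_path_notin in auto)
  next
    case 2
    show False
      by (rule no_cycle_segment[of i' i "[s, z, s']"]) (use 2 h assms E0_sym off_path_notin in auto)
  qed
qed

text \<open>The graphs Alice can produce by adding leaves: the tree is unchanged on its own
  vertices and every new vertex has at most one neighbour in it.\<close>

definition extension :: "nat set \<Rightarrow> (nat \<times> nat) set \<Rightarrow> bool" where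
  "extension V E \<longleftrightarrow> V0 \<subseteq> V \<and> E \<subseteq> V \<times> V \<and> sym E
     \<and> (\<forall>a\<in>V0. \<forall>b\<in>V0. (a, b) \<in> E \<longleftrightarrow> (a, b) \<in> E0)
     \<and> (\<forall>z a b. z \<notin> V0 \<longrightarrow> a \<in> V0 \<longrightarrow> b \<in> V0 \<longrightarrow> (z, a) \<in> E \<longrightarrow> (z, b) \<in> E \<longrightarrow> a = b)"

lemma extension_E0: "extension V E \<Longrightarrow> a \<in> V0 \<Longrightarrow> b \<in> V0 \<Longrightarrow> (a, b) \<in> E \<longleftrightarrow> (a, b) \<in> E0"
  unfolding extension_def by blast

lemma extension_sym: "extension V E \<Longrightarrow> (a, b) \<in> E \<Longrightarrow> (b, a) \<in> E"
  unfolding extension_def by (meson symD)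

lemma extension_edge_in: "extension V E \<Longrightarrow> (a, b) \<in> E \<Longrightarrow> a \<in> V \<and> b \<in> V"
  unfolding extension_def by blast

lemma extension_V0: "extension V E \<Longrightarrow> V0 \<subseteq> V"
  unfolding extension_def by blast

lemma extension_common_nbr:
  assumes "extension V E" "a \<in> V0" "b \<in> V0" "a \<noteq> b" "(z, a) \<in> E" "(z, b) \<in> E"
  shows "z \<in> V0 \<and> (z, a) \<in> E0 \<and> (z, b) \<in> E0"
proof -
  have "z \<in> V0" using assms unfolding extension_def by blast
  then show ?thesis using assms extension_E0 by blast
qed

lemma extension_self: "extension V0 E0"
  unfolding extension_def using edges_in sym_E0 by auto

lemma alice_move_extension:
  assumes mv: "ecg_alice_move k V E col V' E' col'" and ext: "extension V E"
  obtains z where "extension V' E'" "alice_changes k V E col V' E' col' z"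
  using mv
proof cases
  case (color u c)
  show ?thesis by (rule that[of u]) (use color ext in \<open>auto simp: alice_changes_def\<close>)
next
  case pass
  show ?thesis by (rule that[of 0]) (use pass ext in \<open>auto simp: alice_changes_def\<close>)
next
  case (add_leaf w u c)
  have wE: "(w, a) \<notin> E" "(a, w) \<notin> E" for a using ext add_leaf extension_edge_in by blast+
  have wV0: "w \<notin> V0" using ext add_leaf extension_V0 by blast
  have "extension V' E'"
    unfolding extension_def
  proof (intro conjI allI impI)
    show "V0 \<subseteq> V'" using add_leaf extension_V0[OF ext] by auto
    show "E' \<subseteq> V' \<times> V'" "sym E'" using add_leaf ext unfolding extension_def sym_def by auto
    show "\<forall>a\<in>V0. \<forall>b\<in>V0. (a, b) \<in> E' \<longleftrightarrow> (a, b) \<in> E0"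
      using add_leaf ext wV0 unfolding extension_def by auto
    fix z a b assume h: "z \<notin> V0" "a \<in> V0" "b \<in> V0" "(z, a) \<in> E'" "(z, b) \<in> E'"
    show "a = b"
    proof (cases "z = w")
      case True
      then show ?thesis using h wE add_leaf by auto
    next
      case False
      then have "(z, a) \<in> E" "(z, b) \<in> E" using h wV0 add_leaf by auto
      then show ?thesis using ext h unfolding extension_def by blast
    qed
  qed
  then show ?thesis by (rule that[of w]) (use add_leaf ext wE in \<open>auto simp: alice_changes_def\<close>)
qed

lemma path_edge_ext: "extension V E \<Longrightarrow> l < 2*m \<Longrightarrow> (p l, p (Suc l)) \<in> E \<and> (p (Suc l), p l) \<in> E"
  using extension_E0 path_in_V0 path_edge E0_sym by (metis Suc_leI less_imp_le_nat)

lemma side_edge_ext: "extension V E \<Longrightarrow> side s i \<Longrightarrow> (p i, s) \<in> E \<and> (s, p i) \<in> E"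
  using extension_E0 path_in_V0 side_adj side_in_V0 side_index E0_sym by (metis less_imp_le_nat)

lemma side_adj_path_ext: "extension V E \<Longrightarrow> side s i \<Longrightarrow> l \<le> 2*m \<Longrightarrow> (s, p l) \<in> E \<Longrightarrow> l = i"
  using extension_E0 side_in_V0 path_in_V0 side_adj_path by blast

lemma path_adj_side_ext: "extension V E \<Longrightarrow> side s i \<Longrightarrow> l \<le> 2*m \<Longrightarrow> (p l, s) \<in> E \<Longrightarrow> l = i"
  using side_adj_path_ext extension_sym by blast

lemma path_adj_consecutive_ext:
  "extension V E \<Longrightarrow> a \<le> 2*m \<Longrightarrow> b \<le> 2*m \<Longrightarrow> (p a, p b) \<in> E \<Longrightarrow> b = Suc a \<or> a = Suc b"
  using extension_E0 path_in_V0 path_adj_consecutive by blast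

definition ahead :: "nat \<Rightarrow> nat set" where
  "ahead j = {p i | i. j < i \<and> i < 2*m} \<union> {s. \<exists>i. j < i \<and> side s i}"

lemma ahead_in_V0: "y \<in> ahead j \<Longrightarrow> y \<in> V0"
  unfolding ahead_def using path_in_V0 side_in_V0 by fastforce

lemma path_in_ahead: "j < l \<Longrightarrow> l < 2*m \<Longrightarrow> p l \<in> ahead j"
  unfolding ahead_def by blast

lemma side_in_ahead: "j < l \<Longrightarrow> side s l \<Longrightarrow> s \<in> ahead j"
  unfolding ahead_def by blast

lemma ahead_antimono: "j \<le> j' \<Longrightarrow> ahead j' \<subseteq> ahead j"
  unfolding ahead_def by fastforce

lemma aheadE:
  assumes "y \<in> ahead j"
  obtains l where "j < l" "l < 2*m" "y = p l" | l where "j < l" "side y l"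
  using assms unfolding ahead_def by blast

lemma near_restrict:
  assumes "\<And>a b. (a, b) \<in> E' \<Longrightarrow> a \<in> V \<Longrightarrow> b \<in> V \<Longrightarrow> (a, b) \<in> E"
    "extension V E" "z \<in> V" "j \<le> j'" "near E' z (ahead j')"
  shows "near E z (ahead j)"
  using assms ahead_antimono[OF assms(4)] ahead_in_V0 extension_V0[OF assms(2)] unfolding near_def by blast

lemma side_notin_ahead: "side s i \<Longrightarrow> i \<le> j \<Longrightarrow> s \<notin> ahead j"
proof
  assume h: "side s i" "i \<le> j" "s \<in> ahead j"
  show False using h(3)
  proof (cases rule: aheadE)
    case (1 l)
    then show False using side_off_path[OF h(1)] unfolding off_path_def by simp
  next
    case (2 l)
    then have "(s, p l) \<in> E0" "l \<le> 2*m" using side_adj side_index E0_sym by fastforce+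
    then have "l = i" using side_adj_path[OF h(1)] by blast
    then show False using h 2 by simp
  qed
qed

lemma side_not_near_ahead: "extension V E \<Longrightarrow> side s i \<Longrightarrow> i < j \<Longrightarrow> \<not> near E s (ahead j)"
  unfolding near_def
proof
  assume h: "extension V E" "side s i" "i < j" "s \<in> ahead j \<or> (\<exists>y\<in>ahead j. (s, y) \<in> E)"
  then obtain y where y: "y \<in> ahead j" "(s, y) \<in> E" using side_notin_ahead by fastforce
  then have e0: "(s, y) \<in> E0" using extension_E0 h ahead_in_V0 side_in_V0 by blast
  show False using y(1)
  proof (cases rule: aheadE)
    case (1 l)
    then show False using side_adj_path[OF h(2), of l] e0 h(3) by simp
  next
    case (2 l)
    then show False using sides_not_adj[OF h(2)] e0 irrefl by blast
  qed
qed

lemma side_nbr_not_near_ahead: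
  assumes ext: "extension V E" and s: "side s i" and "i < j" "(s, z) \<in> E" "z \<noteq> p i"
  shows "\<not> near E z (ahead j)"
  unfolding near_def
proof
  have sV: "s \<in> V0" using s side_in_V0 by blast
  assume "z \<in> ahead j \<or> (\<exists>y\<in>ahead j. (z, y) \<in> E)"
  then show False
  proof
    assume zZ: "z \<in> ahead j"
    then have sz: "(s, z) \<in> E0" using assms extension_E0 sV ahead_in_V0 by blast
    from zZ show False
    proof (cases rule: aheadE)
      case (1 l)
      then show False using side_adj_path[OF s, of l] sz \<open>i < j\<close> by simp
    next
      case (2 l)
      then show False using sides_not_adj[OF s] sz irrefl by blast
    qed
  next
    assume "\<exists>y\<in>ahead j. (z, y) \<in> E"
    then obtain y where y: "y \<in> ahead j" "(z, y) \<in> E" by blast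
    have "y \<noteq> s" using y side_notin_ahead s \<open>i < j\<close> by fastforce
    moreover have "(z, s) \<in> E" using assms extension_sym by blast
    ultimately have z0: "(z, s) \<in> E0" "(z, y) \<in> E0"
      using extension_common_nbr[OF ext] sV ahead_in_V0 y by blast+
    from y(1) show False
    proof (cases rule: aheadE)
      case (1 l)
      then show False using common_nbr_side_path[OF s, of z l] z0 assms by simp
    next
      case (2 l)
      then show False using common_nbr_sides[OF s _ \<open>y \<noteq> s\<close>[symmetric]] z0 assms by blast
    qed
  qed
qed

lemma path_not_near_ahead: "extension V E \<Longrightarrow> l < j \<Longrightarrow> \<not> near E (p l) (ahead j)"
  unfolding near_def
proof
  assume h: "extension V E" "l < j" "p l \<in> ahead j \<or> (\<exists>y\<in>ahead j. (p l, y) \<in> E)"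
  show False
  proof (cases "p l \<in> ahead j")
    case True
    then show False
    proof (cases rule: aheadE)
      case (1 l')
      have "l = l'" by (rule inj_onD[OF inj_path]) (use 1 h(2) in auto)
      then show False using 1 h(2) by simp
    next
      case (2 l')
      then have "l \<le> 2*m" using side_index[OF 2(2)] h(2) by simp
      then show False using off_path_ne[OF side_off_path[OF 2(2)]] by blast
    qed
  next
    case False
    then obtain y where y: "y \<in> ahead j" "(p l, y) \<in> E" using h by blast
    have "j < 2*m" using y(1) by (cases rule: aheadE) (auto dest: side_index)
    then have "l \<le> 2*m" using h(2) by simp
    then have e0: "(p l, y) \<in> E0" using extension_E0 h(1) y ahead_in_V0 path_in_V0 by blast
    from y(1) show False
    proof (cases rule: aheadE)
      case (1 l')
      then show False using path_adj_consecutive[of l l'] e0 \<open>l \<le> 2*m\<close> h(2) by simp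
    next
      case (2 l')
      then show False using side_adj_path[OF 2(2) \<open>l \<le> 2*m\<close> E0_sym[OF e0]] h(2) by simp
    qed
  qed
qed

lemma blocker_ne_path:
  assumes "extension V E" "side s i" "blocks E col s r z" "l \<le> 2*m" "l \<noteq> i"
  shows "z \<noteq> p l"
proof
  assume z: "z = p l"
  show False
  proof (cases "z = s")
    case True
    then show False using side_off_path[OF assms(2)] off_path_ne assms(4) z by blast
  next
    case False
    then have "(s, p l) \<in> E" using assms(3) z unfolding blocks_def by blast
    then show False using side_adj_path_ext[OF assms(1,2,4)] assms(5) by blast
  qed
qed

lemma blocker_in_V: "extension V E \<Longrightarrow> side s i \<Longrightarrow> blocks E col s r z \<Longrightarrow> z \<in> V"
  unfolding blocks_def using side_in_V0 extension_V0 extension_edge_in by blast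

lemma blocker_colored: "blocks E col s r z \<Longrightarrow> col z \<noteq> None"
  unfolding blocks_def by auto

lemma blocker_near_ahead:
  assumes "extension V E" "side s i" "j < i" "blocks E col s r z"
  shows "near E z (ahead j)"
  using assms(4) side_in_ahead[OF assms(3,2)] extension_sym[OF assms(1), of s z]
  unfolding blocks_def near_def by blast

lemma blocker_not_near_ahead:
  assumes "extension V E" "side s i" "col (p i) = None" "blocks E col s r z" "i < j"
  shows "\<not> near E z (ahead j)"
proof (cases "z = s")
  case True
  then show ?thesis using side_not_near_ahead assms by blast
next
  case False
  then have "(s, z) \<in> E" "z \<noteq> p i" using assms(3,4) unfolding blocks_def by auto
  then show ?thesis using side_nbr_not_near_ahead assms by blast
qed

lemma blockers_distinct:
  assumes ext: "extension V E" and s: "side s i" and t: "side t i" and "s \<noteq> t" "col (p i) = None"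
    and "blocks E col s r z" "blocks E col t r z"
  shows False
proof -
  have V: "s \<in> V0" "t \<in> V0" using s t side_in_V0 by auto
  consider "z = s" | "z = t" | "z \<noteq> s" "z \<noteq> t" by blast
  then show False
  proof cases
    case 1
    then have "(t, s) \<in> E0" using assms extension_E0 V unfolding blocks_def by auto
    then show False using sides_not_adj[OF t s] assms by auto
  next
    case 2
    then have "(s, t) \<in> E0" using assms extension_E0 V unfolding blocks_def by auto
    then show False using sides_not_adj[OF s t] assms by auto
  next
    case 3
    then have "(z, s) \<in> E" "(z, t) \<in> E" "col z \<noteq> None"
      using assms extension_sym[OF ext, of s z] extension_sym[OF ext, of t z] unfolding blocks_def by auto
    then have "z = p i"
      using extension_common_nbr[OF ext V] common_nbr_sides[OF s t] assms by blast
    then show False using assms \<open>col z \<noteq> None\<close> by simp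
  qed
qed

definition lone_intruder :: "nat \<Rightarrow> nat set \<Rightarrow> (nat \<times> nat) set \<Rightarrow> (nat \<Rightarrow> nat option) \<Rightarrow> nat \<Rightarrow> bool" where
  "lone_intruder j V E col e \<longleftrightarrow>
     (\<forall>z\<in>V. col z \<noteq> None \<longrightarrow> z \<noteq> p j \<longrightarrow> z \<noteq> p (2*m) \<longrightarrow> near E z (ahead j) \<longrightarrow> z = e)"

definition invariant :: "nat \<Rightarrow> nat set \<Rightarrow> (nat \<times> nat) set \<Rightarrow> (nat \<Rightarrow> nat option) \<Rightarrow> bool" where
  "invariant j V E col \<longleftrightarrow> extension V E \<and> even j \<and> j < 2*m \<and>
     (\<exists>a b. col (p j) = Some a \<and> col (p (2*m)) = Some b \<and> a \<noteq> b \<and> a < 3 \<and> b < 3) \<and>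
     (\<forall>i. j < i \<longrightarrow> i < 2*m \<longrightarrow> col (p i) = None) \<and> (\<exists>e. lone_intruder j V E col e)"

end

locale invariant_state = forked_path +
  fixes j :: nat and V :: "nat set" and E :: "(nat \<times> nat) set" and col :: "nat \<Rightarrow> nat option"
    and a b c e :: nat
  assumes ext: "extension V E" and even_j: "even j" and j_less: "j < 2*m"
    and col_j: "col (p j) = Some a" and col_end: "col (p (2*m)) = Some b"
    and a_ne_b: "a \<noteq> b" and a3: "a < 3" and b3: "b < 3"
    and c3: "c < 3" and c_ne_a: "c \<noteq> a" and c_ne_b: "c \<noteq> b"
    and ahead_uncolored: "\<forall>i. j < i \<longrightarrow> i < 2*m \<longrightarrow> col (p i) = None"
    and intruder: "lone_intruder j V E col e"
begin

lemma color_cases: "r < 3 \<Longrightarrow> r = a \<or> r = b \<or> r = c"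
  using a3 b3 c3 a_ne_b c_ne_a c_ne_b by arith

lemma two_steps_le: "Suc (Suc j) \<le> 2*m"
  using even_j j_less by (metis Suc_leI even_Suc even_mult_iff even_numeral le_neq_implies_less)

lemma end_ne: "2*m \<noteq> Suc j" "2*m \<noteq> Suc (Suc (Suc j))"
  using even_j by (metis even_Suc even_mult_iff even_numeral)+

lemma next_sides: "side (sp (Suc j)) (Suc j)" "side (tp (Suc j)) (Suc j)" "sp (Suc j) \<noteq> tp (Suc j)"
  using two_steps_le even_j sides unfolding side_def by auto

lemma in_V: "l \<le> 2*m \<Longrightarrow> p l \<in> V" "side s i \<Longrightarrow> s \<in> V"
  using path_in_V0 side_in_V0 extension_V0[OF ext] by auto

lemma path_ne: "l \<le> 2*m \<Longrightarrow> l' \<le> 2*m \<Longrightarrow> l \<noteq> l' \<Longrightarrow> p l \<noteq> p l'"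
  using inj_path unfolding inj_on_def by auto

lemma next_uncolored: "col (p (Suc j)) = None"
  using ahead_uncolored two_steps_le by simp

lemma lone_intruder_eq:
  "z \<in> V \<Longrightarrow> col z \<noteq> None \<Longrightarrow> z \<noteq> p j \<Longrightarrow> z \<noteq> p (2*m) \<Longrightarrow> near E z (ahead j) \<Longrightarrow> z = e"
  using intruder unfolding lone_intruder_def by blast

lemma next_side_blocker: "side s (Suc j) \<Longrightarrow> blocks E col s r z \<Longrightarrow> z = e"
proof -
  assume h: "side s (Suc j)" "blocks E col s r z"
  have "z \<noteq> p j" "z \<noteq> p (2*m)"
    using blocker_ne_path[OF ext h, of j] blocker_ne_path[OF ext h, of "2*m"] j_less end_ne by auto
  then show ?thesis
    using lone_intruder_eq blocker_in_V[OF ext h] blocker_colored[OF h(2)] blocker_near_ahead[OF ext h(1) _ h(2)]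
    by simp
qed

text \<open>When p (Suc j) is the last interior vertex it already sees colours a and b, and only
  one of its two sides can be blocked for c.\<close>

lemma bob_wins_last_step:
  assumes last: "Suc (Suc j) = 2*m"
  shows "ecg_bob_wins_bob_turn 3 V E col"
proof -
  have "\<exists>w. side w (Suc j) \<and> col w = None \<and> legal 3 E col w c"
  proof (rule ccontr)
    assume "\<not> ?thesis"
    then obtain z1 z2 where z: "blocks E col (sp (Suc j)) c z1" "blocks E col (tp (Suc j)) c z2"
      using blocker_exists[OF _ c3] next_sides by metis
    then have "z1 = e" "z2 = e" using next_side_blocker next_sides by blast+
    then show False using blockers_distinct[where col = col and i = "Suc j", OF ext next_sides next_uncolored] z by blast
  qed
  then obtain w where w: "side w (Suc j)" "col w = None" "legal 3 E col w c" by blast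
  have off: "off_path w" using side_off_path w by blast
  show ?thesis
  proof (rule bob_wins_by_trap[where u = "p (Suc j)" and w = w and r = c])
    show "p (Suc j) \<in> V" "w \<in> V" using in_V w two_steps_le by auto
    show "p (Suc j) \<noteq> w" using off_path_ne[OF off] two_steps_le by (metis Suc_leD)
    show "col (p (Suc j)) = None" by (rule next_uncolored)
    show "col w = None" "legal 3 E col w c" using w by auto
    fix r :: nat assume r: "r < 3"
    have "(p (Suc j), p j) \<in> E" "(p (Suc j), p (2*m)) \<in> E" "(p (Suc j), w) \<in> E"
      using path_edge_ext[OF ext, of j] path_edge_ext[OF ext, of "Suc j"] side_edge_ext[OF ext w(1)]
        j_less two_steps_le last by auto
    moreover have "p j \<noteq> w" "p (2*m) \<noteq> w" using off_path_ne[OF off, of j] off_path_ne[OF off, of "2*m"] j_less by auto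
    ultimately show "\<exists>n. (p (Suc j), n) \<in> E \<and> (col(w := Some c)) n = Some r"
      using color_cases[OF r] col_j col_end by auto
  qed
qed

context
  fixes V' E' col' zn
  assumes room: "Suc (Suc j) < 2*m"
    and ext': "extension V' E'"
    and resp: "alice_changes 3 V E (col(p (Suc (Suc j)) := Some c)) V' E' col' zn"
begin

lemma advance_colors:
  "col' (p j) = Some a" "col' (p (Suc (Suc j))) = Some c" "col' (p (2*m)) = Some b"
proof -
  have "p (Suc (Suc j)) \<noteq> p j" "p (Suc (Suc j)) \<noteq> p (2*m)" using path_ne room j_less by auto
  moreover have "p j \<in> V" "p (Suc (Suc j)) \<in> V" "p (2*m) \<in> V" using in_V room j_less by auto
  ultimately show "col' (p j) = Some a" "col' (p (Suc (Suc j))) = Some c" "col' (p (2*m)) = Some b"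
    using alice_changes_colored[OF resp] col_j col_end by auto
qed

lemma advance_intruder:
  assumes "z \<in> V'" "z \<noteq> zn" "col' z \<noteq> None" "z \<noteq> p (Suc (Suc j))" "z \<noteq> p (2*m)"
    and near: "near E' z (ahead (Suc (Suc j)))"
  shows "z = e"
proof (rule lone_intruder_eq)
  show zV: "z \<in> V" using alice_changes_vertex[OF resp] assms by blast
  show "col z \<noteq> None" using alice_changes_other[OF resp, of z] assms by simp
  show "near E z (ahead j)" using near_restrict[OF alice_changes_edge[OF resp] ext zV _ near] by simp
  show "z \<noteq> p j" using path_not_near_ahead[OF ext', of j "Suc (Suc j)"] near by auto
qed (rule assms)

lemma advance_invariant:
  assumes far: "\<not> near E' zn (ahead (Suc (Suc j)))"
  shows "invariant (Suc (Suc j)) V' E' col'"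
  unfolding invariant_def
proof (intro conjI)
  show "extension V' E'" by (rule ext')
  show "even (Suc (Suc j))" using even_j by simp
  show "Suc (Suc j) < 2*m" by (rule room)
  show "\<exists>a b. col' (p (Suc (Suc j))) = Some a \<and> col' (p (2*m)) = Some b \<and> a \<noteq> b \<and> a < 3 \<and> b < 3"
    using advance_colors c_ne_b c3 b3 by blast
  show "\<forall>i>Suc (Suc j). i < 2*m \<longrightarrow> col' (p i) = None"
  proof (intro allI impI)
    fix l assume l: "Suc (Suc j) < l" "l < 2*m"
    then have "p l \<noteq> zn" using far path_in_ahead unfolding near_def by blast
    moreover have "p l \<noteq> p (Suc (Suc j))" using path_ne l by simp
    ultimately show "col' (p l) = None" using alice_changes_other[OF resp] ahead_uncolored l by simp
  qed
  show "\<exists>e. lone_intruder (Suc (Suc j)) V' E' col' e"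
    unfolding lone_intruder_def using advance_intruder far by blast
qed

lemma advance_trap:
  assumes w: "side w (Suc j)" and "col' (p (Suc j)) = None" "col' w = None" "legal 3 E' col' w b"
  shows "ecg_bob_wins_bob_turn 3 V' E' col'"
proof (rule bob_wins_by_trap[where u = "p (Suc j)" and w = w and r = b])
  have off: "off_path w" using side_off_path w by blast
  show "p (Suc j) \<in> V'" "w \<in> V'" using in_V w two_steps_le alice_changes_mono[OF resp] by auto
  show "p (Suc j) \<noteq> w" using off_path_ne[OF off, of "Suc j"] two_steps_le by auto
  show "col' (p (Suc j)) = None" "col' w = None" "legal 3 E' col' w b" by fact+
  fix r :: nat assume r: "r < 3"
  have "(p (Suc j), p j) \<in> E'" "(p (Suc j), p (Suc (Suc j))) \<in> E'" "(p (Suc j), w) \<in> E'"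
    using path_edge_ext[OF ext', of j] path_edge_ext[OF ext', of "Suc j"] side_edge_ext[OF ext' w]
      j_less room by auto
  moreover have "p j \<noteq> w" "p (Suc (Suc j)) \<noteq> w"
    using off_path_ne[OF off, of j] off_path_ne[OF off, of "Suc (Suc j)"] j_less room by auto
  ultimately show "\<exists>n. (p (Suc j), n) \<in> E' \<and> (col'(w := Some b)) n = Some r"
    using color_cases[OF r] advance_colors by auto
qed

lemma advance_side_blocker:
  assumes s: "side s (Suc j)" and blk: "blocks E' col' s b z"
  shows "z = e \<or> z = zn"
proof (rule disjCI)
  assume "z \<noteq> zn"
  have ne: "z \<noteq> p j" "z \<noteq> p (2*m)" "z \<noteq> p (Suc (Suc j))"
    using blocker_ne_path[OF ext' s blk] j_less room end_ne by auto
  have zV: "z \<in> V" using alice_changes_vertex[OF resp blocker_in_V[OF ext' s blk] \<open>z \<noteq> zn\<close>] .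
  have "col z \<noteq> None"
    using blocker_colored[OF blk] alice_changes_other[OF resp \<open>z \<noteq> zn\<close>] ne by simp
  moreover have "near E z (ahead j)"
    using near_restrict[OF alice_changes_edge[OF resp] ext zV order_refl
        blocker_near_ahead[OF ext' s lessI blk]] .
  ultimately show "z = e" using lone_intruder_eq zV ne by blast
qed

text \<open>Either Alice coloured p (Suc j), or both sides of p (Suc j) are blocked for b; in the
  latter case the two blockers are distinct, so one of them is Alice's vertex, which is then
  far from the rest of the path.\<close>

lemma advance_response: "ecg_bob_wins_bob_turn 3 V' E' col' \<or> invariant (Suc (Suc j)) V' E' col'"
proof (cases "col' (p (Suc j)) = None")
  case False
  have "p (Suc j) \<noteq> p (Suc (Suc j))" using path_ne room by simp
  then have "zn = p (Suc j)"
    using False alice_changes_other[OF resp, of "p (Suc j)"] next_uncolored by (cases "zn = p (Suc j)") auto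
  then show ?thesis using advance_invariant path_not_near_ahead[OF ext', of "Suc j"] by auto
next
  case True
  note next_free = this
  show ?thesis
  proof (cases "\<exists>w. side w (Suc j) \<and> col' w = None \<and> legal 3 E' col' w b")
    case True
    then show ?thesis using advance_trap next_free by blast
  next
    case False
    then obtain z1 z2 where z: "blocks E' col' (sp (Suc j)) b z1" "blocks E' col' (tp (Suc j)) b z2"
      using blocker_exists[OF _ b3] next_sides by metis
    have "z1 \<noteq> z2"
      using blockers_distinct[where col = col' and i = "Suc j", OF ext' next_sides next_free] z by blast
    moreover have "z1 = e \<or> z1 = zn" "z2 = e \<or> z2 = zn" using advance_side_blocker next_sides z by blast+
    ultimately have "zn = z1 \<or> zn = z2" by blast
    then have "\<not> near E' zn (ahead (Suc (Suc j)))"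
      using blocker_not_near_ahead[OF ext' next_sides(1) next_free z(1)]
        blocker_not_near_ahead[OF ext' next_sides(2) next_free z(2)] by auto
    then show ?thesis using advance_invariant by blast
  qed
qed

end

lemma bob_wins_advance:
  assumes room: "Suc (Suc j) < 2*m" and free: "legal 3 E col (p (Suc (Suc j))) c"
    and IH: "\<And>V' E' col'. invariant (Suc (Suc j)) V' E' col' \<Longrightarrow> ecg_bob_wins_bob_turn 3 V' E' col'"
  shows "ecg_bob_wins_bob_turn 3 V E col"
proof (rule bob_move[where u = "p (Suc (Suc j))" and c = c])
  show "p (Suc (Suc j)) \<in> V" "col (p (Suc (Suc j))) = None" using in_V ahead_uncolored room by auto
  show "legal 3 E col (p (Suc (Suc j))) c" by (rule free)
  show "ecg_bob_wins_alice_turn 3 V E (col(p (Suc (Suc j)) := Some c))"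
  proof (rule alice_all, intro allI impI)
    fix V' E' col' assume mv: "ecg_alice_move 3 V E (col(p (Suc (Suc j)) := Some c)) V' E' col'"
    obtain zn where "extension V' E'" "alice_changes 3 V E (col(p (Suc (Suc j)) := Some c)) V' E' col' zn"
      by (rule alice_move_extension[OF mv ext])
    then show "ecg_bob_wins_bob_turn 3 V' E' col'" using advance_response[OF room] IH by blast
  qed
qed

context
  assumes room: "Suc (Suc j) < 2*m" and blocked: "\<not> legal 3 E col (p (Suc (Suc j))) c"
begin

lemma room3: "Suc (Suc (Suc j)) < 2*m"
  using room end_ne by simp

lemma intruder_blocks_next: "(p (Suc (Suc j)), e) \<in> E" "col e = Some c"
proof -
  obtain n where n: "(p (Suc (Suc j)), n) \<in> E" "col n = Some c"
    using blocked c3 unfolding legal_def by auto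
  have "n = e"
  proof (rule lone_intruder_eq)
    show "n \<in> V" "col n \<noteq> None" using n extension_edge_in[OF ext] by auto
    show "n \<noteq> p j" "n \<noteq> p (2*m)"
      using path_adj_consecutive_ext[OF ext, of "Suc (Suc j)" j]
        path_adj_consecutive_ext[OF ext, of "Suc (Suc j)" "2*m"] n(1) j_less room end_ne by auto
    show "near E n (ahead j)"
      using path_in_ahead[of j "Suc (Suc j)"] room extension_sym[OF ext n(1)] unfolding near_def by auto
  qed
  then show "(p (Suc (Suc j)), e) \<in> E" "col e = Some c" using n by auto
qed

lemma next_sides_uncolored: "side \<sigma> (Suc j) \<Longrightarrow> col \<sigma> = None"
proof (rule ccontr)
  assume h: "side \<sigma> (Suc j)" "col \<sigma> \<noteq> None"
  have "\<sigma> = e"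
  proof (rule lone_intruder_eq)
    show "\<sigma> \<noteq> p j" "\<sigma> \<noteq> p (2*m)" using off_path_ne[OF side_off_path[OF h(1)]] j_less by auto
    show "near E \<sigma> (ahead j)" using side_in_ahead[OF lessI h(1)] unfolding near_def by blast
  qed (use h in_V in auto)
  then show False
    using intruder_blocks_next(1) path_adj_side_ext[OF ext h(1), of "Suc (Suc j)"] room by simp
qed

lemma intruder_not_adj_side: "side \<sigma> (Suc j) \<Longrightarrow> (\<sigma>, e) \<notin> E"
proof
  assume h: "side \<sigma> (Suc j)" "(\<sigma>, e) \<in> E"
  have ne: "\<sigma> \<noteq> p (Suc (Suc j))" using off_path_ne[OF side_off_path[OF h(1)], of "Suc (Suc j)"] room by simp
  have "(e, \<sigma>) \<in> E0" "(e, p (Suc (Suc j))) \<in> E0"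
    using extension_common_nbr[OF ext side_in_V0[OF h(1)] path_in_V0 ne] room
      extension_sym[OF ext h(2)] extension_sym[OF ext intruder_blocks_next(1)] by auto
  then have "e = p (Suc j)" using common_nbr_side_path[OF h(1), of e "Suc (Suc j)"] room by simp
  then show False using intruder_blocks_next(2) next_uncolored by simp
qed

lemma first_side_legal: "legal 3 E col (sp (Suc j)) c"
  unfolding legal_def
proof (intro conjI allI impI notI)
  fix w assume h: "(sp (Suc j), w) \<in> E" "col w = Some c"
  have "w = e"
  proof (rule lone_intruder_eq)
    show "w \<in> V" "col w \<noteq> None" using h extension_edge_in[OF ext] by auto
    show "w \<noteq> p j" "w \<noteq> p (2*m)"
      using side_adj_path_ext[OF ext next_sides(1), of j] side_adj_path_ext[OF ext next_sides(1), of "2*m"]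
        h j_less end_ne by auto
    show "near E w (ahead j)"
      using h side_in_ahead[OF lessI next_sides(1)] extension_sym[OF ext h(1)] unfolding near_def by blast
  qed
  then show False using intruder_not_adj_side[OF next_sides(1)] h by simp
qed (rule c3)

lemma first_side_ne: "sp (Suc j) \<noteq> e" "l \<le> 2*m \<Longrightarrow> sp (Suc j) \<noteq> p l"
  using next_sides_uncolored[OF next_sides(1)] intruder_blocks_next(2)
    off_path_ne[OF side_off_path[OF next_sides(1)]] by auto

context
  fixes V' E' col' zn
  assumes ext': "extension V' E'"
    and resp: "alice_changes 3 V E (col(sp (Suc j) := Some c)) V' E' col' zn"
begin

lemma blocked_colors:
  "col' (p j) = Some a" "col' (sp (Suc j)) = Some c" "col' e = Some c" "col' (p (2*m)) = Some b"
proof -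
  have "p j \<in> V" "sp (Suc j) \<in> V" "e \<in> V" "p (2*m) \<in> V"
    using in_V next_sides(1) j_less intruder_blocks_next(1) extension_edge_in[OF ext] by auto
  then show "col' (p j) = Some a" "col' (sp (Suc j)) = Some c" "col' e = Some c" "col' (p (2*m)) = Some b"
    using alice_changes_colored[OF resp] first_side_ne(1) first_side_ne(2)[of j] first_side_ne(2)[of "2*m"]
      j_less col_j col_end intruder_blocks_next(2) by auto
qed

lemma blocked_uncolored:
  assumes "u \<noteq> zn" "u \<in> {p (Suc j), p (Suc (Suc j)), p (Suc (Suc (Suc j))), tp (Suc j)}"
  shows "col' u = None"
proof -
  have "u \<noteq> sp (Suc j)"
    using assms(2) first_side_ne(2)[of "Suc j"] first_side_ne(2)[of "Suc (Suc j)"]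
      first_side_ne(2)[of "Suc (Suc (Suc j))"] next_sides(3) room3 by auto
  moreover have "col u = None"
    using assms(2) ahead_uncolored next_sides_uncolored[OF next_sides(2)] room3 by auto
  ultimately show ?thesis using alice_changes_other[OF resp assms(1)] by simp
qed

lemma blocked_edges:
  "(p (Suc j), p j) \<in> E'" "(p (Suc j), p (Suc (Suc j))) \<in> E'" "(p (Suc j), sp (Suc j)) \<in> E'"
  "(p (Suc j), tp (Suc j)) \<in> E'" "(p (Suc (Suc j)), p (Suc j)) \<in> E'"
  "(p (Suc (Suc j)), p (Suc (Suc (Suc j)))) \<in> E'" "(p (Suc (Suc j)), e) \<in> E'"
  using path_edge_ext[OF ext', of j] path_edge_ext[OF ext', of "Suc j"] path_edge_ext[OF ext', of "Suc (Suc j)"]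
    side_edge_ext[OF ext' next_sides(1)] side_edge_ext[OF ext' next_sides(2)] j_less room room3
    intruder_blocks_next(1) alice_changes_mono[OF resp] by auto

lemma blocked_intruder:
  assumes "x \<in> ahead j" "(x, w) \<in> E'" "w \<noteq> zn" "w \<noteq> p j" "w \<noteq> p (2*m)" "w \<noteq> sp (Suc j)"
    "col' w = Some r"
  shows "w = e"
proof (rule lone_intruder_eq)
  show wV: "w \<in> V" using assms alice_changes_vertex[OF resp] extension_edge_in[OF ext'] by blast
  have "x \<in> V" using assms ahead_in_V0 extension_V0[OF ext] by blast
  then have "(w, x) \<in> E" using alice_changes_edge[OF resp extension_sym[OF ext' assms(2)] wV] by simp
  then show "near E w (ahead j)" using assms(1) unfolding near_def by blast
  show "col w \<noteq> None" using assms alice_changes_other[OF resp, of w] by simp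
qed (use assms in auto)

lemma blocked_next_color:
  assumes "col' (p (Suc j)) = Some r"
  shows "zn = p (Suc j)" "r = b"
proof -
  have ne: "p (Suc j) \<noteq> sp (Suc j)" using first_side_ne(2)[of "Suc j"] two_steps_le by auto
  then show zn: "zn = p (Suc j)"
    using assms alice_changes_other[OF resp, of "p (Suc j)"] next_uncolored by (cases "zn = p (Suc j)") auto
  have "legal 3 E (col(sp (Suc j) := Some c)) (p (Suc j)) r"
    using alice_changes_legal[OF resp] zn in_V(1)[of "Suc j"] two_steps_le next_uncolored ne assms by simp
  moreover have "(p (Suc j), p j) \<in> E" "(p (Suc j), sp (Suc j)) \<in> E"
    using path_edge_ext[OF ext, of j] side_edge_ext[OF ext next_sides(1)] j_less by auto
  ultimately have "r < 3" "r \<noteq> a" "r \<noteq> c"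
    using col_j first_side_ne(2)[of j] j_less unfolding legal_def by auto
  then show "r = b" using color_cases by blast
qed

lemma third_legal:
  assumes "zn = p (Suc j)" "col' zn = Some b"
  shows "legal 3 E' col' (p (Suc (Suc (Suc j)))) a"
  unfolding legal_def
proof (intro conjI allI impI notI)
  fix w assume h: "(p (Suc (Suc (Suc j))), w) \<in> E'" "col' w = Some a"
  have "w \<noteq> zn" using h assms a_ne_b by auto
  moreover have "w \<noteq> p j"
    using path_adj_consecutive_ext[OF ext', of "Suc (Suc (Suc j))" j] h(1) j_less room3 by auto
  moreover have "w \<noteq> p (2*m)" using h blocked_colors a_ne_b by auto
  moreover have "w \<noteq> sp (Suc j)"
    using path_adj_side_ext[OF ext' next_sides(1), of "Suc (Suc (Suc j))"] h(1) room3 by auto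
  ultimately have "w = e"
    using blocked_intruder[OF path_in_ahead[of j "Suc (Suc (Suc j))"] h(1)] h room3 by auto
  then show False using h blocked_colors c_ne_a by simp
qed (rule a3)

lemma blocked_next_colored:
  assumes "col' (p (Suc j)) \<noteq> None"
  shows "ecg_bob_wins_bob_turn 3 V' E' col'"
proof -
  obtain r where r: "col' (p (Suc j)) = Some r" using assms by blast
  then have zn: "zn = p (Suc j)" and rb: "r = b" using blocked_next_color by auto
  have ne: "p (Suc (Suc j)) \<noteq> zn" "p (Suc (Suc (Suc j))) \<noteq> zn" using zn path_ne room3 by auto
  show ?thesis
  proof (rule bob_wins_by_trap[where u = "p (Suc (Suc j))" and w = "p (Suc (Suc (Suc j)))" and r = a])
    show "p (Suc (Suc j)) \<in> V'" "p (Suc (Suc (Suc j))) \<in> V'"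
      using in_V room3 alice_changes_mono[OF resp] by auto
    show "p (Suc (Suc j)) \<noteq> p (Suc (Suc (Suc j)))" using path_ne room3 by simp
    show "col' (p (Suc (Suc j))) = None" "col' (p (Suc (Suc (Suc j)))) = None"
      using blocked_uncolored ne by auto
    show "legal 3 E' col' (p (Suc (Suc (Suc j)))) a" using third_legal zn r rb by simp
    fix r' :: nat assume "r' < 3"
    moreover have "p (Suc j) \<noteq> p (Suc (Suc (Suc j)))" "e \<noteq> p (Suc (Suc (Suc j)))"
      using path_ne room3 intruder_blocks_next(2) ahead_uncolored by auto
    ultimately show "\<exists>n. (p (Suc (Suc j)), n) \<in> E' \<and> (col'(p (Suc (Suc (Suc j))) := Some a)) n = Some r'"
      using color_cases blocked_edges blocked_colors r rb by auto
  qed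
qed

lemma second_side_b_nbr:
  assumes "(tp (Suc j), w) \<in> E'" "col' w = Some b"
  shows "w = zn"
proof (rule ccontr)
  assume "w \<noteq> zn"
  have wV: "w \<in> V" using assms extension_edge_in[OF ext'] alice_changes_vertex[OF resp] \<open>w \<noteq> zn\<close> by blast
  have tw: "(tp (Suc j), w) \<in> E" using alice_changes_edge[OF resp assms(1) in_V(2)[OF next_sides(2)] wV] .
  have "w \<noteq> p j" "w \<noteq> p (2*m)"
    using side_adj_path_ext[OF ext next_sides(2), of j] side_adj_path_ext[OF ext next_sides(2), of "2*m"]
      tw j_less end_ne by auto
  moreover have "w \<noteq> sp (Suc j)"
  proof
    assume "w = sp (Suc j)"
    then have "(tp (Suc j), sp (Suc j)) \<in> E0" using tw extension_E0[OF ext] side_in_V0 next_sides by auto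
    then show False using sides_not_adj[OF next_sides(2) next_sides(1)] next_sides(3) by simp
  qed
  ultimately have "w = e"
    using blocked_intruder[OF side_in_ahead[OF lessI next_sides(2)] assms(1) \<open>w \<noteq> zn\<close>] assms(2) by auto
  then show False using assms(2) blocked_colors c_ne_b by simp
qed

lemma second_side_trap:
  assumes free: "col' (p (Suc j)) = None" and "tp (Suc j) \<noteq> zn"
    and no_b: "(tp (Suc j), zn) \<in> E' \<Longrightarrow> col' zn \<noteq> Some b"
  shows "ecg_bob_wins_bob_turn 3 V' E' col'"
proof (rule bob_wins_by_trap[where u = "p (Suc j)" and w = "tp (Suc j)" and r = b])
  have off: "off_path (tp (Suc j))" using side_off_path next_sides(2) by blast
  show "p (Suc j) \<in> V'" "tp (Suc j) \<in> V'"
    using in_V next_sides(2) two_steps_le alice_changes_mono[OF resp] by auto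
  show "p (Suc j) \<noteq> tp (Suc j)" using off_path_ne[OF off, of "Suc j"] two_steps_le by auto
  show "col' (p (Suc j)) = None" by (rule free)
  show "col' (tp (Suc j)) = None" using blocked_uncolored \<open>tp (Suc j) \<noteq> zn\<close> by simp
  show "legal 3 E' col' (tp (Suc j)) b" unfolding legal_def using second_side_b_nbr no_b b3 by blast
  fix r :: nat assume "r < 3"
  moreover have "p j \<noteq> tp (Suc j)" using off_path_ne[OF off, of j] j_less by auto
  ultimately show "\<exists>n. (p (Suc j), n) \<in> E' \<and> (col'(tp (Suc j) := Some b)) n = Some r"
    using color_cases blocked_edges blocked_colors next_sides(3) by auto
qed

lemma blocked_second_colored:
  assumes free: "col' (p (Suc j)) = None" and "col' (p (Suc (Suc j))) \<noteq> None"
  shows "ecg_bob_wins_bob_turn 3 V' E' col'"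
proof -
  have zn: "zn = p (Suc (Suc j))" using blocked_uncolored[of "p (Suc (Suc j))"] assms(2) by auto
  obtain r where r: "col' (p (Suc (Suc j))) = Some r" using assms(2) by blast
  have "p (Suc (Suc j)) \<noteq> sp (Suc j)" using first_side_ne(2)[of "Suc (Suc j)"] room by auto
  then have "legal 3 E (col(sp (Suc j) := Some c)) (p (Suc (Suc j))) r"
    using alice_changes_legal[OF resp] zn r in_V(1)[of "Suc (Suc j)"] room ahead_uncolored by simp
  then have "r < 3" "r \<noteq> c" using intruder_blocks_next first_side_ne(1) unfolding legal_def by auto
  then consider "r = a" | "r = b" using color_cases by blast
  then show ?thesis
  proof cases
    case 1
    show ?thesis
    proof (rule second_side_trap[OF free])
      show "tp (Suc j) \<noteq> zn"
        using zn off_path_ne[OF side_off_path[OF next_sides(2)], of "Suc (Suc j)"] room by auto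
      show "col' zn \<noteq> Some b" using zn r 1 a_ne_b by simp
    qed
  next
    case 2
    show ?thesis
    proof (rule bob_wins_stuck_vertex[where u = "p (Suc j)"])
      show "p (Suc j) \<in> V'" using in_V two_steps_le alice_changes_mono[OF resp] by auto
      show "col' (p (Suc j)) = None" by (rule free)
      fix r' :: nat assume "r' < 3"
      then show "\<exists>w. (p (Suc j), w) \<in> E' \<and> col' w = Some r'"
        using color_cases blocked_edges blocked_colors r 2 by auto
    qed
  qed
qed

lemma second_blocker_is_alice:
  assumes "(p (Suc (Suc j)), w) \<in> E'" "col' w = Some b"
  shows "w = zn"
proof (rule ccontr)
  assume "w \<noteq> zn"
  have wV: "w \<in> V" using assms extension_edge_in[OF ext'] alice_changes_vertex[OF resp] \<open>w \<noteq> zn\<close> by blast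
  have "(p (Suc (Suc j)), w) \<in> E"
    using alice_changes_edge[OF resp assms(1) in_V(1)[of "Suc (Suc j)"] wV] room by simp
  then have "w \<noteq> p j" "w \<noteq> p (2*m)" "w \<noteq> sp (Suc j)"
    using path_adj_consecutive_ext[OF ext, of "Suc (Suc j)" j]
      path_adj_consecutive_ext[OF ext, of "Suc (Suc j)" "2*m"]
      path_adj_side_ext[OF ext next_sides(1), of "Suc (Suc j)"] j_less room end_ne by auto
  then have "w = e"
    using blocked_intruder[OF path_in_ahead[of j "Suc (Suc j)"] assms(1) \<open>w \<noteq> zn\<close>] assms(2) room by auto
  then show False using assms(2) blocked_colors c_ne_b by simp
qed

lemma second_path_trap:
  assumes "col' (p (Suc j)) = None" "col' (p (Suc (Suc j))) = None" "legal 3 E' col' (p (Suc (Suc j))) b"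
  shows "ecg_bob_wins_bob_turn 3 V' E' col'"
proof (rule bob_wins_by_trap[where u = "p (Suc j)" and w = "p (Suc (Suc j))" and r = b])
  show "p (Suc j) \<in> V'" "p (Suc (Suc j)) \<in> V'" using in_V room alice_changes_mono[OF resp] by auto
  show "p (Suc j) \<noteq> p (Suc (Suc j))" using path_ne room by simp
  fix r :: nat assume "r < 3"
  moreover have "p j \<noteq> p (Suc (Suc j))" "sp (Suc j) \<noteq> p (Suc (Suc j))"
    using path_ne first_side_ne(2) room by auto
  ultimately show "\<exists>n. (p (Suc j), n) \<in> E' \<and> (col'(p (Suc (Suc j)) := Some b)) n = Some r"
    using color_cases blocked_edges blocked_colors by auto
qed (use assms in auto)

lemma alice_apart_from_second_side:
  assumes zn: "(p (Suc (Suc j)), zn) \<in> E'" "col' zn = Some b" and free: "col' (p (Suc j)) = None"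
  shows "tp (Suc j) \<noteq> zn" "(tp (Suc j), zn) \<notin> E'"
proof -
  have ne: "tp (Suc j) \<noteq> p (Suc (Suc j))"
    using off_path_ne[OF side_off_path[OF next_sides(2)], of "Suc (Suc j)"] room by simp
  show "tp (Suc j) \<noteq> zn"
  proof
    assume "tp (Suc j) = zn"
    then have "(p (Suc (Suc j)), tp (Suc j)) \<in> E"
      using alice_changes_edge[OF resp zn(1)] in_V next_sides(2) room by auto
    then show False using path_adj_side_ext[OF ext next_sides(2), of "Suc (Suc j)"] room by simp
  qed
  show "(tp (Suc j), zn) \<notin> E'"
  proof
    assume "(tp (Suc j), zn) \<in> E'"
    then have "(zn, tp (Suc j)) \<in> E0" "(zn, p (Suc (Suc j))) \<in> E0"
      using extension_common_nbr[OF ext' side_in_V0[OF next_sides(2)] path_in_V0 ne]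
        extension_sym[OF ext', of "tp (Suc j)" zn] extension_sym[OF ext' zn(1)] room by auto
    then have "zn = p (Suc j)" using common_nbr_side_path[OF next_sides(2), of zn "Suc (Suc j)"] room by simp
    then show False using zn(2) free by simp
  qed
qed

lemma blocked_second_free:
  assumes free: "col' (p (Suc j)) = None" and "col' (p (Suc (Suc j))) = None"
  shows "ecg_bob_wins_bob_turn 3 V' E' col'"
proof (cases "legal 3 E' col' (p (Suc (Suc j))) b")
  case True
  then show ?thesis using second_path_trap assms by blast
next
  case False
  then obtain w where w: "(p (Suc (Suc j)), w) \<in> E'" "col' w = Some b" using b3 unfolding legal_def by auto
  then have "w = zn" by (rule second_blocker_is_alice)
  then show ?thesis
    using second_side_trap[OF free] alice_apart_from_second_side[OF _ _ free] w by blast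
qed

lemma blocked_response: "ecg_bob_wins_bob_turn 3 V' E' col'"
  using blocked_next_colored blocked_second_colored blocked_second_free by blast

end

lemma bob_wins_blocked: "ecg_bob_wins_bob_turn 3 V E col"
proof (rule bob_move[where u = "sp (Suc j)" and c = c])
  show "sp (Suc j) \<in> V" "col (sp (Suc j)) = None" using in_V next_sides next_sides_uncolored by auto
  show "legal 3 E col (sp (Suc j)) c" by (rule first_side_legal)
  show "ecg_bob_wins_alice_turn 3 V E (col(sp (Suc j) := Some c))"
  proof (rule alice_all, intro allI impI)
    fix V' E' col' assume mv: "ecg_alice_move 3 V E (col(sp (Suc j) := Some c)) V' E' col'"
    obtain zn where "extension V' E'" "alice_changes 3 V E (col(sp (Suc j) := Some c)) V' E' col' zn"
      by (rule alice_move_extension[OF mv ext])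
    then show "ecg_bob_wins_bob_turn 3 V' E' col'" by (rule blocked_response)
  qed
qed

end

end

lemma (in forked_path) bob_wins_from_invariant:
  "invariant j V E col \<Longrightarrow> ecg_bob_wins_bob_turn 3 V E col"
proof (induction "2*m - j" arbitrary: j V E col rule: less_induct)
  case less
  from less.prems obtain a b e where state: "extension V E" "even j" "j < 2*m"
    "col (p j) = Some a" "col (p (2*m)) = Some b"
    "\<forall>i. j < i \<longrightarrow> i < 2*m \<longrightarrow> col (p i) = None" "lone_intruder j V E col e"
    and ab: "a \<noteq> b" "a < 3" "b < 3"
    unfolding invariant_def by blast
  define c where "c = 3 - a - b"
  have "c < 3" "c \<noteq> a" "c \<noteq> b" using ab unfolding c_def by arith+
  with state ab interpret invariant_state V0 E0 p m sp tp j V E col a b c e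
    by (intro invariant_state.intro invariant_state_axioms.intro forked_path_axioms) auto
  show ?case
  proof (cases "Suc (Suc j) = 2*m")
    case True
    then show ?thesis by (rule bob_wins_last_step)
  next
    case False
    then have room: "Suc (Suc j) < 2*m" using two_steps_le by simp
    show ?thesis
    proof (cases "legal 3 E col (p (Suc (Suc j))) c")
      case True
      show ?thesis
      proof (rule bob_wins_advance[OF room True])
        fix V' E' col' assume "invariant (Suc (Suc j)) V' E' col'"
        moreover have "2*m - Suc (Suc j) < 2*m - j" using room by simp
        ultimately show "ecg_bob_wins_bob_turn 3 V' E' col'" using less.hyps by blast
      qed
    next
      case False
      then show ?thesis by (rule bob_wins_blocked[OF room])
    qed
  qed
qed

lemma finite_nbrs: "finite V \<Longrightarrow> E \<subseteq> V \<times> V \<Longrightarrow> finite {w. (u, w) \<in> E}"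
  by (rule finite_subset[of _ V]) auto

lemma (in forked_path) interior_not_leaf:
  assumes "finite V0" "0 < i" "i < 2*m"
  shows "degree E0 (p i) \<noteq> 1"
proof -
  have "(p (i - 1), p (Suc (i - 1))) \<in> E0" using path_edge assms by (meson less_imp_diff_less)
  moreover have "Suc (i - 1) = i" using assms by simp
  ultimately have "(p i, p (i - 1)) \<in> E0" "(p i, p (Suc i)) \<in> E0" using E0_sym path_edge assms by auto
  moreover have "p (i - 1) \<noteq> p (Suc i)"
  proof
    assume "p (i - 1) = p (Suc i)"
    then have "i - 1 = Suc i" by (rule inj_onD[OF inj_path]) (use assms in auto)
    then show False by simp
  qed
  ultimately have "2 \<le> degree E0 (p i)"
    unfolding degree_def using two_le_card[OF finite_nbrs[OF assms(1) edges_in]] by blast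
  then show ?thesis by simp
qed

lemma (in forked_path) initial_invariant:
  assumes "finite V0" and colors: "\<forall>u\<in>V0. \<forall>c. col u = Some c \<longrightarrow> c < 3"
    and trunk: "\<forall>u\<in>V0. col u \<noteq> None \<longrightarrow> degree E0 u = 1"
    and ends: "col (p 0) \<noteq> None" "col (p (2*m)) \<noteq> None" "col (p 0) \<noteq> col (p (2*m))"
    and only: "\<forall>u\<in>V0. col u \<noteq> None \<longrightarrow> u = p 0 \<or> u = p (2*m) \<or> u = v"
  shows "invariant 0 V0 E0 col"
  unfolding invariant_def
proof (intro conjI)
  show "\<exists>a b. col (p 0) = Some a \<and> col (p (2*m)) = Some b \<and> a \<noteq> b \<and> a < 3 \<and> b < 3"
    using ends colors path_in_V0[of 0] path_in_V0[of "2*m"] by auto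
  show "\<forall>i>0. i < 2*m \<longrightarrow> col (p i) = None"
    using interior_not_leaf[OF assms(1)] trunk path_in_V0 by (meson less_imp_le_nat)
  show "\<exists>e. lone_intruder 0 V0 E0 col e"
    unfolding lone_intruder_def using only by blast
qed (use extension_self m_pos in auto)

lemma two_other_nbrs:
  assumes "finite V" "E \<subseteq> V \<times> V" "4 \<le> degree E u"
  shows "\<exists>s t. (u, s) \<in> E \<and> (u, t) \<in> E \<and> s \<noteq> t \<and> s \<notin> {a, b} \<and> t \<notin> {a, b}"
proof -
  obtain s t where "s \<in> {w. (u, w) \<in> E}" "t \<in> {w. (u, w) \<in> E}" "s \<noteq> t" "s \<notin> {a, b}" "t \<notin> {a, b}"
    using two_elements_avoiding[OF finite_nbrs[OF assms(1,2)]] assms(3) unfolding degree_def by blast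
  then show ?thesis by blast
qed

lemma forked_path_of_tree:
  assumes tree: "is_tree V E" and path: "is_path E q x y" and "x \<noteq> y"
    and even: "even (length q - 1)" and deg: "\<forall>i<length q. odd i \<longrightarrow> 4 \<le> degree E (q ! i)"
  obtains m sp tp where "forked_path V E (\<lambda>i. q ! i) m sp tp" "q ! 0 = x" "q ! (2*m) = y"
proof -
  have finV: "finite V" and sub: "E \<subseteq> V \<times> V" and "sym E" "\<forall>u. (u, u) \<notin> E" "\<not> has_cycle E"
    using tree unfolding is_tree_def by auto
  have "q \<noteq> []" and walk: "\<forall>i. Suc i < length q \<longrightarrow> (q ! i, q ! Suc i) \<in> E"
    and "distinct q" and "hd q = x" "last q = y"
    using path unfolding is_path_def is_walk_def by auto
  define m where "m = (length q - 1) div 2"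
  have len: "length q = Suc (2*m)" using even \<open>q \<noteq> []\<close> unfolding m_def by simp
  have ends: "q ! 0 = x" "q ! (2*m) = y"
    using \<open>hd q = x\<close> \<open>last q = y\<close> \<open>q \<noteq> []\<close> len by (simp_all add: hd_conv_nth last_conv_nth)
  then have "1 \<le> m" using \<open>x \<noteq> y\<close> by (cases m) auto
  have "\<exists>s t. odd i \<and> i < 2*m \<longrightarrow> (q ! i, s) \<in> E \<and> (q ! i, t) \<in> E \<and> s \<noteq> t
      \<and> s \<notin> {q ! (i - 1), q ! Suc i} \<and> t \<notin> {q ! (i - 1), q ! Suc i}" for i
    using two_other_nbrs[OF finV sub, of "q ! i"] deg len by (cases "odd i \<and> i < 2*m") auto
  then obtain sp tp where "\<forall>i. odd i \<and> i < 2*m \<longrightarrow> (q ! i, sp i) \<in> E \<and> (q ! i, tp i) \<in> E \<and> sp i \<noteq> tp i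
      \<and> sp i \<notin> {q ! (i - 1), q ! Suc i} \<and> tp i \<notin> {q ! (i - 1), q ! Suc i}"
    by metis
  moreover have "inj_on (\<lambda>i. q ! i) {..2*m}"
    using \<open>distinct q\<close> len by (auto simp: inj_on_def nth_eq_iff_index_eq)
  ultimately have "forked_path V E (\<lambda>i. q ! i) m sp tp"
    using sub \<open>sym E\<close> \<open>\<forall>u. (u, u) \<notin> E\<close> \<open>\<not> has_cycle E\<close> \<open>1 \<le> m\<close> walk len
    by unfold_locales auto
  then show ?thesis using ends that by blast
qed

theorem lemma7p1:
  fixes V :: "nat set" and E :: "(nat \<times> nat) set" and col :: "nat \<Rightarrow> nat option"
    and x y v :: nat
  assumes tree: "is_tree V E"
    and colors: "\<forall>u\<in>V. \<forall>c. col u = Some c \<longrightarrow> c < 3"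
    and proper: "proper_partial E col"
    and trunk: "\<forall>u\<in>V. col u \<noteq> None \<longrightarrow> degree E u = 1"
    and xV: "x \<in> V" and yV: "y \<in> V" and vV: "v \<in> V"
    and x_col: "col x \<noteq> None" and y_col: "col y \<noteq> None"
    and only: "\<forall>u\<in>V. col u \<noteq> None \<longrightarrow> u = x \<or> u = y \<or> u = v"
    and diff: "col x \<noteq> col y"
    and xy_path: "\<forall>p. is_path E p x y \<longrightarrow>
        even (length p - 1) \<and> (\<forall>i<length p. odd i \<longrightarrow> degree E (p ! i) \<ge> 4)"
  shows "ecg_bob_wins_bob_turn 3 V E col"
proof -
  obtain q where q: "is_path E q x y" using tree xV yV unfolding is_tree_def by blast
  moreover have "x \<noteq> y" using diff by auto
  ultimately obtain m sp tp where fp: "forked_path V E (\<lambda>i. q ! i) m sp tp"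
    and ends: "q ! 0 = x" "q ! (2*m) = y"
    using forked_path_of_tree[OF tree] xy_path by blast
  have "forked_path.invariant V E (\<lambda>i. q ! i) m sp tp 0 V E col"
    using forked_path.initial_invariant[OF fp] tree colors trunk x_col y_col diff only ends
    unfolding is_tree_def by simp
  then show ?thesis by (rule forked_path.bob_wins_from_invariant[OF fp])
qed

end
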